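(* Let $n \ge 1$ be such that $SP_n$ is tree-complete and $n+1$ is prime. Then $SP_{n+1}$ and $SP_{n+2}$ are tree-complete. Further, if $n+1$ and $n+3$ are both prime, then $SP_{n+1}, SP_{n+2}, SP_{n+3}, SP_{n+4}, SP_{n+5}$ are all tree-complete.
   Context: For $n \ge 1$, the super prime graph $SP_n$ is the graph with node set $\{1,2,\dots,n\}$ in which two distinct nodes $u, v$ are adjacent if and only if $\gcd(u,v) = 1$. A graph $G$ of order $n$ is tree-complete if every tree of order $n$ is isomorphic to a subgraph of $G$. *)

theory Defs
  imports "HOL-Computational_Algebra.Primes"
begin

definition simple_graph :: "'a set \<Rightarrow> 'a set set \<Rightarrow> bool" where
  "simple_graph V E \<longleftrightarrow> finite V \<and> (\<forall>e\<in>E. e \<subseteq> V \<and> card e = 2)"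

definition graph_adj :: "'a set set \<Rightarrow> 'a \<Rightarrow> 'a \<Rightarrow> bool" where
  "graph_adj E u v \<longleftrightarrow> {u, v} \<in> E"

definition connected_graph :: "'a set \<Rightarrow> 'a set set \<Rightarrow> bool" where
  "connected_graph V E \<longleftrightarrow> (\<forall>u\<in>V. \<forall>v\<in>V. (graph_adj E)\<^sup>*\<^sup>* u v)"

definition has_cycle :: "'a set set \<Rightarrow> bool" where
  "has_cycle E \<longleftrightarrow> (\<exists>xs. length xs \<ge> 3 \<and> distinct xs \<and>
      (\<forall>i. i + 1 < length xs \<longrightarrow> graph_adj E (xs ! i) (xs ! (i + 1))) \<and>
      graph_adj E (last xs) (hd xs))"

definition is_tree :: "'a set \<Rightarrow> 'a set set \<Rightarrow> bool" where
  "is_tree V E \<longleftrightarrow> simple_graph V E \<and> V \<noteq> {} \<and> connected_graph V E \<and> \<not> has_cycle E"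

definition subgraph_embeds :: "'a set \<Rightarrow> 'a set set \<Rightarrow> 'b set \<Rightarrow> 'b set set \<Rightarrow> bool" where
  "subgraph_embeds V E W F \<longleftrightarrow>
     (\<exists>f. inj_on f V \<and> f ` V \<subseteq> W \<and> (\<forall>e\<in>E. f ` e \<in> F))"

text \<open>G of order n = card W is tree-complete if every tree of order n embeds.
  Trees are taken with vertex sets of natural numbers (every finite tree is
  isomorphic to one of these).\<close>
definition tree_complete :: "'b set \<Rightarrow> 'b set set \<Rightarrow> bool" where
  "tree_complete W F \<longleftrightarrow>
     (\<forall>(T :: nat set) TE. is_tree T TE \<and> card T = card W \<longrightarrow> subgraph_embeds T TE W F)"

definition SP_vertices :: "nat \<Rightarrow> nat set" where
  "SP_vertices n = {1..n}"

definition SP_edges :: "nat \<Rightarrow> nat set set" where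
  "SP_edges n = {{u, v} | u v. u \<in> {1..n} \<and> v \<in> {1..n} \<and> u \<noteq> v \<and> coprime u v}"

end

theory Submission
  imports Defs
begin

text \<open>
  Let p = m + 1 be prime and suppose every tree on m vertices embeds in SP_m. A tree T on m + k
  vertices, k \<le> 3, has a set S of k vertices joined to the rest of T only through one vertex s of S:
  a single vertex, a leaf with its neighbour, or, at the start v0 v1 v2 ... of a longest path, either
  v0 and v1 together with another leaf at v1, or v0 v1 v2 itself. Contracting S into the rest of T
  leaves a tree on the other m vertices that keeps every edge of T among them. Embed it into SP_m,
  give s the label p, which is coprime to each of 1, ..., m, and give the rest of S the labels up to
  m + k; edges inside S are harmless because m + 1, ..., m + k are pairwise coprime for k \<le> 2, and
  also for k = 3 when p is odd. The second claim is the first one applied to SP_(n+2) and the prime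
  n + 3.
\<close>

lemma symp_graph_adj: "symp (graph_adj E)"
  by (simp add: symp_def graph_adj_def insert_commute)

lemma graph_adj_rtranclp_sym: "(graph_adj E)\<^sup>*\<^sup>* u v \<Longrightarrow> (graph_adj E)\<^sup>*\<^sup>* v u"
  using symp_rtranclp[OF symp_graph_adj] by (rule sympD)

lemma rtranclp_lift:
  assumes "\<And>x y. R x y \<Longrightarrow> S\<^sup>*\<^sup>* x y" and "R\<^sup>*\<^sup>* a b"
  shows "S\<^sup>*\<^sup>* a b"
proof -
  have "R\<^sup>*\<^sup>* \<le> (S\<^sup>*\<^sup>*)\<^sup>*\<^sup>*" using assms(1) by (intro rtranclp_mono) blast
  then show ?thesis using assms(2) by auto
qed

lemma simple_graph_edge:
  "simple_graph V E \<Longrightarrow> {a, b} \<in> E \<Longrightarrow> a \<in> V \<and> b \<in> V \<and> a \<noteq> b"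
  unfolding simple_graph_def by (metis card_2_iff doubleton_eq_iff insert_subset)

lemma tree_edge: "is_tree V E \<Longrightarrow> {a, b} \<in> E \<Longrightarrow> a \<in> V \<and> b \<in> V \<and> a \<noteq> b"
  unfolding is_tree_def by (blast dest: simple_graph_edge)

lemma rtranclp_distinct_path:
  assumes "R\<^sup>*\<^sup>* u v"
  shows "\<exists>ps. ps \<noteq> [] \<and> distinct ps \<and> hd ps = u \<and> last ps = v \<and>
           (\<forall>i. i + 1 < length ps \<longrightarrow> R (ps ! i) (ps ! (i + 1)))"
  using assms
proof (induction rule: rtranclp_induct)
  case base
  show ?case by (rule exI[of _ "[u]"]) auto
next
  case (step b c)
  then obtain ps where ps: "ps \<noteq> []" "distinct ps" "hd ps = u" "last ps = b"
    "\<forall>i. i + 1 < length ps \<longrightarrow> R (ps ! i) (ps ! (i + 1))" by blast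
  show ?case
  proof (cases "c \<in> set ps")
    case True
    then obtain j where j: "j < length ps" "ps ! j = c" by (auto simp: in_set_conv_nth)
    let ?qs = "take (j + 1) ps"
    have "last ?qs = c" using j by (simp add: take_Suc_conv_app_nth)
    moreover have "\<forall>i. i + 1 < length ?qs \<longrightarrow> R (?qs ! i) (?qs ! (i + 1))"
      using ps(5) j by auto
    ultimately show ?thesis using ps(1-3) by (intro exI[of _ ?qs]) auto
  next
    case False
    have "R ((ps @ [c]) ! i) ((ps @ [c]) ! (i + 1))" if "i + 1 < length (ps @ [c])" for i
    proof (cases "i + 1 < length ps")
      case True
      then show ?thesis using ps(5) by (simp add: nth_append)
    next
      case False
      then have "i = length ps - 1" using that by simp
      then show ?thesis using ps(1,4) step(2) by (simp add: nth_append last_conv_nth)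
    qed
    with ps False show ?thesis by (intro exI[of _ "ps @ [c]"]) auto
  qed
qed

section \<open>Cycles and bridges\<close>

definition all_edges_bridges :: "'a set set \<Rightarrow> bool" where
  "all_edges_bridges E \<longleftrightarrow>
     (\<forall>u v. {u, v} \<in> E \<longrightarrow> u \<noteq> v \<longrightarrow> \<not> (graph_adj (E - {{u, v}}))\<^sup>*\<^sup>* u v)"

lemma has_cycle_imp_not_all_edges_bridges:
  assumes "has_cycle E"
  shows "\<not> all_edges_bridges E"
proof -
  obtain xs where xs: "length xs \<ge> 3" "distinct xs"
    "\<forall>i. i + 1 < length xs \<longrightarrow> graph_adj E (xs ! i) (xs ! (i + 1))"
    "graph_adj E (last xs) (hd xs)"
    using assms unfolding has_cycle_def by blast
  define L where "L = length xs"
  let ?u = "xs ! 0" and ?v = "xs ! (L - 1)"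
  let ?F = "E - {{?u, ?v}}"
  have ne: "xs \<noteq> []" using xs(1) by auto
  have idx: "xs ! i = xs ! k \<longleftrightarrow> i = k" if "i < L" "k < L" for i k
    using that nth_eq_iff_index_eq[OF xs(2)] by (simp add: L_def)
  have L: "0 < L" "L - 1 < L" "0 \<noteq> L - 1" using xs(1) by (auto simp: L_def)
  have uv: "?u \<noteq> ?v" using idx L by simp
  have closing: "{?u, ?v} \<in> E"
    using ne xs(4) by (simp add: L_def graph_adj_def last_conv_nth hd_conv_nth insert_commute)
  have "(graph_adj ?F)\<^sup>*\<^sup>* ?u (xs ! j)" if "j < L" for j
    using that
  proof (induction j)
    case 0
    show ?case by simp
  next
    case (Suc j)
    have "{xs ! j, xs ! Suc j} \<noteq> {?u, ?v}"
    proof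
      assume "{xs ! j, xs ! Suc j} = {?u, ?v}"
      then have "(j = 0 \<and> Suc j = L - 1) \<or> (j = L - 1 \<and> Suc j = 0)"
        using Suc.prems L by (simp add: doubleton_eq_iff idx)
      then show False using xs(1) by (auto simp: L_def)
    qed
    then have "graph_adj ?F (xs ! j) (xs ! Suc j)"
      using xs(3) Suc.prems by (auto simp: L_def graph_adj_def)
    then show ?case using Suc by (meson Suc_lessD rtranclp.rtrancl_into_rtrancl)
  qed
  then have "(graph_adj ?F)\<^sup>*\<^sup>* ?u ?v" using xs(1) by (simp add: L_def)
  then show ?thesis using closing uv unfolding all_edges_bridges_def by blast
qed

lemma not_all_edges_bridges_imp_has_cycle:
  assumes "\<not> all_edges_bridges E"
  shows "has_cycle E"
proof -
  obtain u v where uv: "{u, v} \<in> E" "u \<noteq> v" and walk: "(graph_adj (E - {{u, v}}))\<^sup>*\<^sup>* u v"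
    using assms unfolding all_edges_bridges_def by blast
  obtain ps where ps: "ps \<noteq> []" "distinct ps" "hd ps = u" "last ps = v"
    "\<forall>i. i + 1 < length ps \<longrightarrow> graph_adj (E - {{u, v}}) (ps ! i) (ps ! (i + 1))"
    using rtranclp_distinct_path[OF walk] by blast
  have "length ps \<noteq> 1"
    using ps(3,4) uv(2) by (cases ps) auto
  moreover have "length ps \<noteq> 2"
  proof
    assume "length ps = 2"
    then have "ps ! 0 = u" "ps ! 1 = v" using ps(1,3,4) by (auto simp: hd_conv_nth last_conv_nth)
    then show False using ps(5) \<open>length ps = 2\<close> by (auto simp: graph_adj_def)
  qed
  moreover have "length ps \<noteq> 0" using ps(1) by simp
  ultimately have "length ps \<ge> 3" by presburger
  moreover have "\<forall>i. i + 1 < length ps \<longrightarrow> graph_adj E (ps ! i) (ps ! (i + 1))"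
    using ps(5) by (auto simp: graph_adj_def)
  moreover have "graph_adj E (last ps) (hd ps)"
    using ps uv by (simp add: graph_adj_def insert_commute)
  ultimately show ?thesis unfolding has_cycle_def using ps(2) by blast
qed

lemma all_edges_bridges_iff_no_cycle: "all_edges_bridges E \<longleftrightarrow> \<not> has_cycle E"
  using has_cycle_imp_not_all_edges_bridges not_all_edges_bridges_imp_has_cycle by blast

section \<open>Edge contraction\<close>

definition contract_edge :: "'a set set \<Rightarrow> 'a \<Rightarrow> 'a \<Rightarrow> 'a set set" where
  "contract_edge E w z = {e \<in> E. w \<notin> e} \<union> {{z, y} | y. {w, y} \<in> E \<and> y \<noteq> z}"

lemma contract_edge_keeps: "e \<in> E \<Longrightarrow> w \<notin> e \<Longrightarrow> e \<in> contract_edge E w z"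
  by (simp add: contract_edge_def)

lemma contract_edge_memE:
  assumes "{x, y} \<in> contract_edge E w z"
  obtains "{x, y} \<in> E" "w \<notin> {x, y}" | y' where "{x, y} = {z, y'}" "{w, y'} \<in> E"
  using assms unfolding contract_edge_def by blast

lemma simple_graph_contract_edge:
  assumes G: "simple_graph V E" and wz: "{w, z} \<in> E"
  shows "simple_graph (V - {w}) (contract_edge E w z)"
proof -
  have "z \<in> V - {w}" using simple_graph_edge[OF G wz] by blast
  moreover have "y \<in> V - {w}" if "{w, y} \<in> E" for y using simple_graph_edge[OF G that] by blast
  ultimately show ?thesis
    using G unfolding simple_graph_def contract_edge_def by (fastforce simp: card_insert_if)
qed

lemma contract_edge_adj_image:
  assumes "graph_adj E a b"
  shows "(graph_adj (contract_edge E w z))\<^sup>*\<^sup>* (if a = w then z else a) (if b = w then z else b)"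
proof -
  let ?E' = "contract_edge E w z"
  have from_w: "(graph_adj ?E')\<^sup>*\<^sup>* z (if y = w then z else y)" if "{w, y} \<in> E" for y
  proof (cases "y = w \<or> y = z")
    case True
    then show ?thesis by auto
  next
    case False
    then have "graph_adj ?E' z y" using that by (auto simp: graph_adj_def contract_edge_def)
    then show ?thesis using False by simp
  qed
  consider "a = w" | "b = w" | "a \<noteq> w" "b \<noteq> w" by blast
  then show ?thesis
  proof cases
    case 1
    then show ?thesis using from_w[of b] assms by (simp add: graph_adj_def)
  next
    case 2
    then have "(graph_adj ?E')\<^sup>*\<^sup>* z (if a = w then z else a)"
      using from_w[of a] assms by (simp add: graph_adj_def insert_commute)
    then show ?thesis using 2 by (simp add: graph_adj_rtranclp_sym)
  next
    case 3
    then have "graph_adj ?E' a b" using assms by (simp add: graph_adj_def contract_edge_def)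
    then show ?thesis using 3 by simp
  qed
qed

lemma connected_contract_edge:
  assumes conn: "connected_graph V E"
  shows "connected_graph (V - {w}) (contract_edge E w z)"
proof -
  let ?E' = "contract_edge E w z"
  define \<pi> where "\<pi> x = (if x = w then z else x)" for x
  have walk: "(graph_adj ?E')\<^sup>*\<^sup>* (\<pi> a) (\<pi> b)" if "(graph_adj E)\<^sup>*\<^sup>* a b" for a b
    using that
  proof (induction rule: rtranclp_induct)
    case base
    show ?case by simp
  next
    case (step b c)
    then show ?case using contract_edge_adj_image[of E b c w z] unfolding \<pi>_def by (meson rtranclp_trans)
  qed
  show ?thesis
    unfolding connected_graph_def
  proof (intro ballI)
    fix a b assume "a \<in> V - {w}" "b \<in> V - {w}"
    then have "(graph_adj E)\<^sup>*\<^sup>* a b" "\<pi> a = a" "\<pi> b = b"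
      using conn by (auto simp: connected_graph_def \<pi>_def)
    then show "(graph_adj ?E')\<^sup>*\<^sup>* a b" using walk[of a b] by simp
  qed
qed

lemma rtranclp_graph_adj_via: "{x, w} \<in> F \<Longrightarrow> {w, y} \<in> F \<Longrightarrow> (graph_adj F)\<^sup>*\<^sup>* x y"
  unfolding graph_adj_def by (meson converse_rtranclp_into_rtranclp r_into_rtranclp)

lemma contract_edge_walk_lift_avoiding:
  assumes wz: "{w, z} \<in> E" and "w \<notin> r"
    and walk: "(graph_adj (contract_edge E w z - {r}))\<^sup>*\<^sup>* a b"
  shows "(graph_adj (E - {r}))\<^sup>*\<^sup>* a b"
proof (rule rtranclp_lift[OF _ walk])
  fix x y
  assume "graph_adj (contract_edge E w z - {r}) x y"
  then have xy: "{x, y} \<in> contract_edge E w z" "{x, y} \<noteq> r" by (auto simp: graph_adj_def)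
  from xy(1) show "(graph_adj (E - {r}))\<^sup>*\<^sup>* x y"
  proof (rule contract_edge_memE)
    assume "{x, y} \<in> E"
    then show ?thesis using xy(2) by (simp add: graph_adj_def r_into_rtranclp)
  next
    fix y' assume "{x, y} = {z, y'}" "{w, y'} \<in> E"
    then show ?thesis using \<open>w \<notin> r\<close> wz
      by (intro rtranclp_graph_adj_via[where w = w]) (auto simp: doubleton_eq_iff insert_commute)
  qed
qed

lemma contract_edge_walk_lift_moved:
  assumes wz: "{w, z} \<in> E" and "y0 \<noteq> w" "z \<noteq> y0"
    and walk: "(graph_adj (contract_edge E w z - {{z, y0}}))\<^sup>*\<^sup>* a b"
  shows "(graph_adj (E - {{w, y0}}))\<^sup>*\<^sup>* a b"
proof (rule rtranclp_lift[OF _ walk])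
  fix x y
  assume "graph_adj (contract_edge E w z - {{z, y0}}) x y"
  then have xy: "{x, y} \<in> contract_edge E w z" "{x, y} \<noteq> {z, y0}" by (auto simp: graph_adj_def)
  from xy(1) show "(graph_adj (E - {{w, y0}}))\<^sup>*\<^sup>* x y"
  proof (rule contract_edge_memE)
    assume "{x, y} \<in> E" "w \<notin> {x, y}"
    then show ?thesis by (intro r_into_rtranclp) (auto simp: graph_adj_def)
  next
    fix y' assume "{x, y} = {z, y'}" "{w, y'} \<in> E"
    then show ?thesis using xy(2) wz \<open>y0 \<noteq> w\<close> \<open>z \<noteq> y0\<close>
      by (intro rtranclp_graph_adj_via[where w = w]) (auto simp: doubleton_eq_iff insert_commute)
  qed
qed

lemma all_edges_bridges_contract_edge:
  assumes G: "simple_graph V E" and B: "all_edges_bridges E" and wz: "{w, z} \<in> E"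
  shows "all_edges_bridges (contract_edge E w z)"
  unfolding all_edges_bridges_def
proof (intro allI impI notI)
  let ?E' = "contract_edge E w z"
  have bridge: "\<not> (graph_adj (E - {{u, v}}))\<^sup>*\<^sup>* u v" if "{u, v} \<in> E" "u \<noteq> v" for u v
    using B that unfolding all_edges_bridges_def by blast
  fix a b
  assume ab: "{a, b} \<in> ?E'" "a \<noteq> b" and walk: "(graph_adj (?E' - {{a, b}}))\<^sup>*\<^sup>* a b"
  from ab(1) show False
  proof (rule contract_edge_memE)
    assume "{a, b} \<in> E" "w \<notin> {a, b}"
    then show False
      using bridge ab(2) contract_edge_walk_lift_avoiding[OF wz _ walk] by blast
  next
    fix y0 assume new: "{a, b} = {z, y0}" "{w, y0} \<in> E"
    have "w \<noteq> z" "y0 \<noteq> w" using simple_graph_edge[OF G wz] simple_graph_edge[OF G new(2)] by auto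
    have "z \<noteq> y0" using new(1) ab(2) by auto
    have "(graph_adj (?E' - {{z, y0}}))\<^sup>*\<^sup>* z y0"
    proof (cases "a = z")
      case True
      then show ?thesis using walk new(1) ab(2) by (auto simp: doubleton_eq_iff)
    next
      case False
      then have "a = y0" "b = z" using new(1) by (auto simp: doubleton_eq_iff)
      then show ?thesis using graph_adj_rtranclp_sym[OF walk] new(1) by simp
    qed
    \<comment> \<open>the moved edge {z, y0} comes from {w, y0}, which thereby lies on a cycle\<close>
    then have "(graph_adj (E - {{w, y0}}))\<^sup>*\<^sup>* z y0"
      using contract_edge_walk_lift_moved[OF wz \<open>y0 \<noteq> w\<close> \<open>z \<noteq> y0\<close>] by blast
    moreover have "graph_adj (E - {{w, y0}}) w z"
      using wz \<open>z \<noteq> y0\<close> by (auto simp: graph_adj_def doubleton_eq_iff)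
    ultimately have "(graph_adj (E - {{w, y0}}))\<^sup>*\<^sup>* w y0"
      by (rule converse_rtranclp_into_rtranclp[rotated])
    then show False using bridge new(2) \<open>y0 \<noteq> w\<close> by blast
  qed
qed

lemma is_tree_contract_edge:
  assumes T: "is_tree V E" and wz: "{w, z} \<in> E"
  shows "is_tree (V - {w}) (contract_edge E w z)"
proof -
  have G: "simple_graph V E" and "connected_graph V E" and "all_edges_bridges E"
    using T by (simp_all add: is_tree_def all_edges_bridges_iff_no_cycle)
  moreover have "V - {w} \<noteq> {}" using simple_graph_edge[OF G wz] by blast
  ultimately show ?thesis
    using simple_graph_contract_edge[OF G wz] connected_contract_edge
      all_edges_bridges_contract_edge[OF G _ wz]
    by (simp add: is_tree_def all_edges_bridges_iff_no_cycle)
qed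

lemma connected_graph_neighbour:
  assumes "connected_graph V E" "x \<in> V" "v \<in> V" "x \<noteq> v"
  obtains y where "{x, y} \<in> E"
proof -
  have "(graph_adj E)\<^sup>*\<^sup>* x v" using assms(1-3) unfolding connected_graph_def by blast
  then obtain y where "graph_adj E x y" using assms(4) by (blast elim: converse_rtranclpE)
  then show thesis using that by (simp add: graph_adj_def)
qed

lemma tree_containing_induced_edges:
  assumes "is_tree V E" "W \<subseteq> V" "W \<noteq> {}"
  shows "\<exists>E'. is_tree W E' \<and> (\<forall>e\<in>E. e \<subseteq> W \<longrightarrow> e \<in> E')"
  using assms
proof (induction "card (V - W)" arbitrary: V E)
  case 0
  then have "finite (V - W)" by (simp add: is_tree_def simple_graph_def)
  then have "V = W" using 0 by auto
  then show ?case using 0 by blast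
next
  case (Suc c)
  then have fin: "finite V" and conn: "connected_graph V E"
    by (simp_all add: is_tree_def simple_graph_def)
  have "V - W \<noteq> {}" using Suc.hyps(2) card.empty by force
  then obtain x where x: "x \<in> V" "x \<notin> W" by blast
  obtain v where v: "v \<in> W" using Suc.prems(3) by blast
  then have "v \<in> V" "x \<noteq> v" using x(2) Suc.prems(2) by auto
  then obtain y where xy: "{x, y} \<in> E" using connected_graph_neighbour[OF conn x(1)] by blast
  have "V - {x} - W = (V - W) - {x}" by blast
  then have "card (V - {x} - W) = c" using Suc.hyps(2) x fin by simp
  moreover have "is_tree (V - {x}) (contract_edge E x y)"
    using Suc.prems(1) xy by (rule is_tree_contract_edge)
  ultimately obtain E' where "is_tree W E'" "\<forall>e\<in>contract_edge E x y. e \<subseteq> W \<longrightarrow> e \<in> E'"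
    using Suc.hyps(1) Suc.prems(2,3) x(2) by blast
  then show ?case using x(2) by (blast intro: contract_edge_keeps)
qed

section \<open>Longest paths in trees\<close>

definition simple_path :: "'a set \<Rightarrow> 'a set set \<Rightarrow> 'a list \<Rightarrow> bool" where
  "simple_path V E ps \<longleftrightarrow> distinct ps \<and> set ps \<subseteq> V \<and>
     (\<forall>i. i + 1 < length ps \<longrightarrow> {ps ! i, ps ! (i + 1)} \<in> E)"

definition longest_path :: "'a set \<Rightarrow> 'a set set \<Rightarrow> 'a list \<Rightarrow> bool" where
  "longest_path V E ps \<longleftrightarrow>
     simple_path V E ps \<and> (\<forall>qs. simple_path V E qs \<longrightarrow> length qs \<le> length ps)"

lemma simple_path_Nil [simp]: "simple_path V E []"
  by (simp add: simple_path_def)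

lemma simple_path_Cons:
  "simple_path V E (x # ps) \<longleftrightarrow>
     x \<in> V \<and> x \<notin> set ps \<and> (ps \<noteq> [] \<longrightarrow> {x, hd ps} \<in> E) \<and> simple_path V E ps"
proof -
  have "(\<forall>i. i + 1 < length (x # ps) \<longrightarrow> {(x # ps) ! i, (x # ps) ! (i + 1)} \<in> E) \<longleftrightarrow>
        (ps \<noteq> [] \<longrightarrow> {x, hd ps} \<in> E) \<and> (\<forall>i. i + 1 < length ps \<longrightarrow> {ps ! i, ps ! (i + 1)} \<in> E)"
    (is "?L \<longleftrightarrow> ?R")
  proof
    assume L: ?L
    have "ps \<noteq> [] \<longrightarrow> {x, hd ps} \<in> E" using L[rule_format, of 0] by (cases ps) auto
    moreover have "{ps ! i, ps ! (i + 1)} \<in> E" if "i + 1 < length ps" for i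
      using L[rule_format, of "Suc i"] that by simp
    ultimately show ?R by blast
  next
    assume R: ?R
    show ?L
    proof (intro allI impI)
      fix i assume "i + 1 < length (x # ps)"
      then show "{(x # ps) ! i, (x # ps) ! (i + 1)} \<in> E"
        using R by (cases i) (auto simp: hd_conv_nth)
    qed
  qed
  then show ?thesis unfolding simple_path_def by auto
qed

lemma simple_path_nth_mem: "simple_path V E ps \<Longrightarrow> i < length ps \<Longrightarrow> ps ! i \<in> V"
  by (auto simp: simple_path_def)

lemma simple_path_nth_eq_iff:
  "simple_path V E ps \<Longrightarrow> i < length ps \<Longrightarrow> j < length ps \<Longrightarrow> ps ! i = ps ! j \<longleftrightarrow> i = j"
  by (simp add: simple_path_def nth_eq_iff_index_eq)

lemma longest_path_exists:
  assumes "finite V"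
  shows "\<exists>ps. longest_path V E ps"
proof -
  have "length ps < card V + 1" if "simple_path V E ps" for ps
    using that assms card_mono[of V "set ps"] by (simp add: simple_path_def distinct_card)
  then show ?thesis
    using ex_has_greatest_nat[of "simple_path V E" "[]" length "card V + 1"]
    unfolding longest_path_def by auto
qed

lemma simple_path_chord_has_cycle:
  assumes p: "simple_path V E ps" and ij: "i + 2 \<le> j" "j < length ps"
    and chord: "{ps ! i, ps ! j} \<in> E"
  shows "has_cycle E"
proof -
  let ?xs = "take (j + 1 - i) (drop i ps)"
  have len: "length ?xs = j + 1 - i" using ij by simp
  have nth: "?xs ! k = ps ! (i + k)" if "k < j + 1 - i" for k using that ij by simp
  have "distinct ?xs" using p by (simp add: simple_path_def)
  moreover have "length ?xs \<ge> 3" using len ij by simp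
  moreover have "graph_adj E (?xs ! k) (?xs ! (k + 1))" if "k + 1 < length ?xs" for k
    using p that nth len ij by (simp add: simple_path_def graph_adj_def)
  moreover have "hd ?xs = ps ! i" "last ?xs = ps ! j"
    using nth[of 0] nth[of "j - i"] len ij by (simp_all add: hd_conv_nth last_conv_nth)
  then have "graph_adj E (last ?xs) (hd ?xs)"
    using chord by (simp add: graph_adj_def insert_commute)
  ultimately show ?thesis unfolding has_cycle_def by blast
qed

lemma connected_graph_closed_subset:
  assumes "connected_graph V E" "s \<in> V"
    and closed: "\<And>a b. {a, b} \<in> E \<Longrightarrow> a \<in> S \<Longrightarrow> b \<in> S" and "s \<in> S"
  shows "V \<subseteq> S"
proof
  fix v assume "v \<in> V"
  then have "(graph_adj E)\<^sup>*\<^sup>* s v" using assms(1,2) unfolding connected_graph_def by blast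
  then show "v \<in> S"
  proof (induction rule: rtranclp_induct)
    case base
    show ?case using \<open>s \<in> S\<close> .
  next
    case (step b c)
    then show ?case using closed by (simp add: graph_adj_def)
  qed
qed

lemma tree_longest_path_length_ge_2:
  assumes T: "is_tree V E" and "card V \<ge> 2" and lp: "longest_path V E ps"
  shows "length ps \<ge> 2"
proof -
  have fin: "finite V" using T by (simp add: is_tree_def simple_graph_def)
  have "\<not> card V \<le> Suc 0" using \<open>card V \<ge> 2\<close> by simp
  then obtain a b where ab: "a \<in> V" "b \<in> V" "a \<noteq> b"
    using card_le_Suc0_iff_eq[OF fin] by blast
  then obtain d where ad: "{a, d} \<in> E"
    using T connected_graph_neighbour[of V E a b] by (auto simp: is_tree_def)
  then have "simple_path V E [a, d]"
    using tree_edge[OF T ad] by (simp add: simple_path_Cons)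
  then show ?thesis using lp unfolding longest_path_def by fastforce
qed

lemma longest_path_hd_neighbour:
  assumes T: "is_tree V E" and lp: "longest_path V E ps" and "length ps \<ge> 2"
    and e: "{ps ! 0, y} \<in> E"
  shows "y = ps ! 1"
proof -
  have p: "simple_path V E ps" using lp by (simp add: longest_path_def)
  have "y \<in> set ps"
  proof (rule ccontr)
    assume "y \<notin> set ps"
    then have "simple_path V E (y # ps)"
      using p tree_edge[OF T e] e \<open>length ps \<ge> 2\<close>
      by (auto simp: simple_path_Cons hd_conv_nth insert_commute)
    then show False using lp unfolding longest_path_def by fastforce
  qed
  then obtain j where j: "j < length ps" "ps ! j = y" by (auto simp: in_set_conv_nth)
  have "j \<noteq> 0"
  proof
    assume "j = 0"
    then show False using j tree_edge[OF T e] by simp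
  qed
  moreover have "\<not> j \<ge> 2"
    using simple_path_chord_has_cycle[OF p, of 0 j] j e T by (auto simp: is_tree_def)
  ultimately show ?thesis using j by (simp add: numeral_2_eq_2 not_less_eq_eq le_Suc_eq)
qed

lemma tree_longest_path_length_ge_3:
  assumes T: "is_tree V E" and "card V \<ge> 3" and lp: "longest_path V E ps"
  shows "length ps \<ge> 3"
proof (rule ccontr)
  assume "\<not> length ps \<ge> 3"
  moreover have "length ps \<ge> 2" using tree_longest_path_length_ge_2[OF T _ lp] \<open>card V \<ge> 3\<close> by simp
  ultimately have "length ps = 2" by simp
  then obtain v0 v1 where ps: "ps = [v0, v1]" by (auto simp: numeral_2_eq_2 length_Suc_conv)
  have p: "simple_path V E ps" using lp by (simp add: longest_path_def)
  have "V \<subseteq> {v0, v1}"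
  proof (rule connected_graph_closed_subset)
    show "connected_graph V E" using T by (simp add: is_tree_def)
    show "v0 \<in> V" using p ps by (simp add: simple_path_def)
  next
    fix a b assume ab: "{a, b} \<in> E" "a \<in> {v0, v1}"
    show "b \<in> {v0, v1}"
    proof (rule ccontr)
      assume b: "b \<notin> {v0, v1}"
      show False
      proof (cases "a = v0")
        case True
        then show False using longest_path_hd_neighbour[OF T lp, of b] ab b ps by simp
      next
        case False
        then have "simple_path V E [v0, v1, b]"
          using p ps ab tree_edge[OF T ab(1)] b by (auto simp: simple_path_Cons)
        then show False using lp ps unfolding longest_path_def by fastforce
      qed
    qed
  qed simp
  then have "card V \<le> card {v0, v1}" by (simp add: card_mono)
  also have "\<dots> \<le> 2" by (simp add: card_insert_if)
  finally show False using \<open>card V \<ge> 3\<close> by simp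
qed

lemma longest_path_second_neighbour_leaf:
  assumes T: "is_tree V E" and lp: "longest_path V E ps" and "length ps \<ge> 3"
    and u: "{ps ! 1, u} \<in> E" "u \<noteq> ps ! 2" and uy: "{u, y} \<in> E"
  shows "y = ps ! 1"
proof -
  have p: "simple_path V E ps" using lp by (simp add: longest_path_def)
  have u1: "u \<noteq> ps ! 1" "u \<in> V" using tree_edge[OF T u(1)] by auto
  show ?thesis
  proof (cases "u \<in> set ps")
    case True
    then obtain j where j: "j < length ps" "ps ! j = u" by (auto simp: in_set_conv_nth)
    have "j \<noteq> 1" "j \<noteq> 2" using j u u1 by auto
    moreover have "\<not> j \<ge> 3"
      using simple_path_chord_has_cycle[OF p, of 1 j] j u(1) T by (auto simp: is_tree_def)
    ultimately have "j = 0" by simp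
    then show ?thesis
      using longest_path_hd_neighbour[OF T lp] uy j \<open>length ps \<ge> 3\<close> by simp
  next
    case False
    obtain v0 rs where ps: "ps = v0 # rs" using \<open>length ps \<ge> 3\<close> by (cases ps) auto
    have "rs \<noteq> []" using ps \<open>length ps \<ge> 3\<close> by auto
    then have "hd rs = ps ! 1" using ps by (simp add: hd_conv_nth)
    then have "simple_path V E (u # rs)"
      using p ps False u1 u(1) by (auto simp: simple_path_Cons insert_commute)
    moreover have "length (u # rs) = length ps" using ps by simp
    ultimately have "longest_path V E (u # rs)" using lp by (simp add: longest_path_def)
    from longest_path_hd_neighbour[OF T this] show ?thesis
      using uy ps \<open>length ps \<ge> 3\<close> by simp
  qed
qed

definition pendant_at :: "'a set set \<Rightarrow> 'a set \<Rightarrow> 'a \<Rightarrow> bool" where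
  "pendant_at E S s \<longleftrightarrow> s \<in> S \<and> (\<forall>a \<in> S - {s}. \<forall>b. {a, b} \<in> E \<longrightarrow> b \<in> S)"

lemma tree_pendant_pair:
  assumes T: "is_tree V E" and "card V \<ge> 2"
  shows "\<exists>S s. S \<subseteq> V \<and> card S = 2 \<and> pendant_at E S s"
proof -
  have "finite V" using T by (simp add: is_tree_def simple_graph_def)
  then obtain ps where lp: "longest_path V E ps" using longest_path_exists by blast
  then have p: "simple_path V E ps" by (simp add: longest_path_def)
  have len: "length ps \<ge> 2" using tree_longest_path_length_ge_2[OF T _ lp] \<open>card V \<ge> 2\<close> by simp
  then have "0 < length ps" "1 < length ps" by auto
  then have "ps ! 0 \<noteq> ps ! 1" "{ps ! 0, ps ! 1} \<subseteq> V"
    using simple_path_nth_mem[OF p] simple_path_nth_eq_iff[OF p] by auto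
  moreover have "b = ps ! 1" if "{ps ! 0, b} \<in> E" for b
    using longest_path_hd_neighbour[OF T lp len that] .
  ultimately show ?thesis
    by (intro exI[of _ "{ps ! 0, ps ! 1}"] exI[of _ "ps ! 1"]) (auto simp: pendant_at_def)
qed

lemma tree_pendant_triple:
  assumes T: "is_tree V E" and "card V \<ge> 3"
  shows "\<exists>S s. S \<subseteq> V \<and> card S = 3 \<and> pendant_at E S s"
proof -
  have "finite V" using T by (simp add: is_tree_def simple_graph_def)
  then obtain ps where lp: "longest_path V E ps" using longest_path_exists by blast
  then have p: "simple_path V E ps" by (simp add: longest_path_def)
  have len: "length ps \<ge> 3" using tree_longest_path_length_ge_3[OF T _ lp] \<open>card V \<ge> 3\<close> by simp
  define v0 v1 v2 where "v0 = ps ! 0" and "v1 = ps ! 1" and "v2 = ps ! 2"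
  have "0 < length ps" "1 < length ps" "2 < length ps" using len by auto
  then have dist: "v0 \<noteq> v1" "v0 \<noteq> v2" "v1 \<noteq> v2" and sub: "{v0, v1, v2} \<subseteq> V"
    using simple_path_nth_mem[OF p] simple_path_nth_eq_iff[OF p] by (auto simp: v0_def v1_def v2_def)
  have leaf0: "b = v1" if "{v0, b} \<in> E" for b
    using longest_path_hd_neighbour[OF T lp _ that[unfolded v0_def]] len by (simp add: v1_def)
  show ?thesis
  proof (cases "\<exists>u. {v1, u} \<in> E \<and> u \<noteq> v0 \<and> u \<noteq> v2")
    case True
    then obtain u where u: "{v1, u} \<in> E" "u \<noteq> v0" "u \<noteq> v2" by blast
    have "u \<noteq> v1" "u \<in> V" using tree_edge[OF T u(1)] by auto
    moreover have "b = v1" if "{u, b} \<in> E" for b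
      using longest_path_second_neighbour_leaf[OF T lp len] u that by (simp add: v1_def v2_def)
    ultimately show ?thesis
      using dist sub leaf0 u(2)
      by (intro exI[of _ "{v0, u, v1}"] exI[of _ v1]) (auto simp: pendant_at_def)
  next
    case False
    then show ?thesis
      using dist sub leaf0
      by (intro exI[of _ "{v0, v1, v2}"] exI[of _ v2]) (auto simp: pendant_at_def)
  qed
qed

lemma tree_pendant_set:
  assumes T: "is_tree V E" and k: "k \<in> {1, 2, 3}" "k \<le> card V"
  shows "\<exists>S s. S \<subseteq> V \<and> card S = k \<and> pendant_at E S s"
proof -
  consider "k = 1" | "k = 2" | "k = 3" using k(1) by blast
  then show ?thesis
  proof cases
    case 1
    obtain v where "v \<in> V" using T by (auto simp: is_tree_def)
    then show ?thesis using 1 by (intro exI[of _ "{v}"] exI[of _ v]) (auto simp: pendant_at_def)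
  qed (use tree_pendant_pair[OF T] tree_pendant_triple[OF T] k(2) in auto)
qed

section \<open>Embedding trees into super prime graphs\<close>

lemma SP_edges_memI:
  "a \<in> {1..N} \<Longrightarrow> b \<in> {1..N} \<Longrightarrow> a \<noteq> b \<Longrightarrow> coprime a b \<Longrightarrow> {a, b} \<in> SP_edges N"
  unfolding SP_edges_def by blast

lemma SP_edges_mono:
  assumes "m \<le> N"
  shows "SP_edges m \<subseteq> SP_edges N"
proof
  fix e assume "e \<in> SP_edges m"
  then obtain u v where "e = {u, v}" "u \<in> {1..m}" "v \<in> {1..m}" "u \<noteq> v" "coprime u v"
    unfolding SP_edges_def by blast
  then show "e \<in> SP_edges N" using assms SP_edges_memI[of u N v] by auto
qed

lemma subgraph_embeds_SP_glue:
  assumes G: "simple_graph V E" and "W \<subseteq> V" and "m \<le> N"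
    and g: "inj_on g W" "g ` W \<subseteq> {1..m}" "\<And>e. e \<in> E \<Longrightarrow> e \<subseteq> W \<Longrightarrow> g ` e \<in> SP_edges m"
    and h: "inj_on h (V - W)" "h ` (V - W) \<subseteq> {m<..N}"
    and coprime_out: "\<And>a b k. {a, b} \<in> E \<Longrightarrow> a \<notin> W \<Longrightarrow> b \<in> W \<Longrightarrow> k \<in> {1..m} \<Longrightarrow> coprime (h a) k"
    and coprime_in: "\<And>a b. {a, b} \<in> E \<Longrightarrow> a \<notin> W \<Longrightarrow> b \<notin> W \<Longrightarrow> coprime (h a) (h b)"
  shows "subgraph_embeds V E (SP_vertices N) (SP_edges N)"
proof -
  define f where "f x = (if x \<in> W then g x else h x)" for x
  have "g ` W \<inter> h ` (V - W) = {}" using g(2) h(2) by fastforce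
  from inj_on_disjoint_Un[OF g(1) h(1) this] have f_inj: "inj_on f V"
    using \<open>W \<subseteq> V\<close> by (simp add: f_def[abs_def] Un_absorb1)
  have f_range: "f x \<in> {1..N}" if "x \<in> V" for x
    using that g(2) h(2) \<open>m \<le> N\<close> by (cases "x \<in> W") (auto simp: f_def)
  have cross: "{f a, f b} \<in> SP_edges N" if ab: "{a, b} \<in> E" "a \<notin> W" for a b
  proof -
    have "a \<in> V" "b \<in> V" "a \<noteq> b" using simple_graph_edge[OF G ab(1)] by auto
    moreover have "coprime (f a) (f b)"
    proof (cases "b \<in> W")
      case True
      then show ?thesis using coprime_out[OF ab True] g(2) ab(2) by (auto simp: f_def)
    next
      case False
      then show ?thesis using coprime_in[OF ab False] ab(2) by (simp add: f_def)
    qed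
    moreover have "f a \<noteq> f b" using f_inj \<open>a \<in> V\<close> \<open>b \<in> V\<close> \<open>a \<noteq> b\<close> by (auto dest: inj_onD)
    ultimately show ?thesis using f_range by (simp add: SP_edges_memI)
  qed
  have "f ` e \<in> SP_edges N" if e: "e \<in> E" for e
  proof -
    have "card e = 2" using G e by (simp add: simple_graph_def)
    then obtain a b where ab: "e = {a, b}" by (auto simp: card_2_iff)
    consider "a \<in> W" "b \<in> W" | "a \<notin> W" | "b \<notin> W" by blast
    then show ?thesis
    proof cases
      case 1
      then have "f ` e = g ` e" using ab by (auto simp: f_def)
      moreover have "e \<subseteq> W" using 1 ab by simp
      then have "g ` e \<in> SP_edges m" by (rule g(3)[OF e])
      ultimately show ?thesis using SP_edges_mono[OF \<open>m \<le> N\<close>] by auto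
    next
      case 2
      then show ?thesis using cross[of a b] e ab by simp
    next
      case 3
      then show ?thesis using cross[of b a] e ab by (simp add: insert_commute)
    qed
  qed
  then show ?thesis
    using f_inj f_range unfolding subgraph_embeds_def SP_vertices_def by blast
qed


lemma subgraph_embeds_SP_extend:
  fixes V :: "nat set"
  assumes tc: "tree_complete (SP_vertices m) (SP_edges m)"
    and T: "is_tree V E" and W: "W \<subseteq> V" "W \<noteq> {}" "card W = m" and "m \<le> N"
    and h: "inj_on h (V - W)" "h ` (V - W) \<subseteq> {m<..N}"
    and coprime_out: "\<And>a b k. {a, b} \<in> E \<Longrightarrow> a \<notin> W \<Longrightarrow> b \<in> W \<Longrightarrow> k \<in> {1..m} \<Longrightarrow> coprime (h a) k"
    and coprime_in: "\<And>a b. {a, b} \<in> E \<Longrightarrow> a \<notin> W \<Longrightarrow> b \<notin> W \<Longrightarrow> coprime (h a) (h b)"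
  shows "subgraph_embeds V E (SP_vertices N) (SP_edges N)"
proof -
  obtain E' where T': "is_tree W E'" and induced: "\<And>e. e \<in> E \<Longrightarrow> e \<subseteq> W \<Longrightarrow> e \<in> E'"
    using tree_containing_induced_edges[OF T W(1,2)] by blast
  have "card W = card (SP_vertices m)" using W(3) by (simp add: SP_vertices_def)
  with T' have "subgraph_embeds W E' (SP_vertices m) (SP_edges m)"
    using tc unfolding tree_complete_def by simp
  then obtain g where g: "inj_on g W" "g ` W \<subseteq> {1..m}" "\<And>e. e \<in> E' \<Longrightarrow> g ` e \<in> SP_edges m"
    unfolding subgraph_embeds_def SP_vertices_def by blast
  have G: "simple_graph V E" using T by (simp add: is_tree_def)
  show ?thesis
    using subgraph_embeds_SP_glue[OF G W(1) \<open>m \<le> N\<close> g(1,2) _ h] g(3) induced coprime_out coprime_in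
    by blast
qed

lemma finite_same_card_bij_with_value:
  assumes "finite S" "finite L" "card S = card L" "s \<in> S" "l \<in> L"
  obtains h where "bij_betw h S L" "h s = l"
proof -
  have "card (S - {s}) = card (L - {l})" using assms by simp
  then obtain h0 where h0: "bij_betw h0 (S - {s}) (L - {l})"
    using finite_same_card_bij assms(1,2) by blast
  define h where "h = h0(s := l)"
  have "bij_betw h (S - {s}) (L - {l})"
    using h0 by (rule bij_betw_cong[THEN iffD1, rotated]) (simp add: h_def)
  moreover have "bij_betw h {s} {l}" by (simp add: h_def)
  ultimately have "bij_betw h (S - {s} \<union> {s}) (L - {l} \<union> {l})"
    by (rule bij_betw_combine) simp
  moreover have "S - {s} \<union> {s} = S" "L - {l} \<union> {l} = L" using assms(4,5) by blast+
  moreover have "h s = l" by (simp add: h_def)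
  ultimately show thesis using that by simp
qed

lemma tree_complete_SP_add:
  assumes m: "m \<ge> 1" and tc: "tree_complete (SP_vertices m) (SP_edges m)"
    and p: "prime (m + 1)" and k: "k \<in> {1, 2, 3}"
    and labels: "pairwise coprime {m + 1..m + k}"
  shows "tree_complete (SP_vertices (m + k)) (SP_edges (m + k))"
  unfolding tree_complete_def
proof (intro allI impI, elim conjE)
  fix T :: "nat set" and TE
  assume T: "is_tree T TE" and "card T = card (SP_vertices (m + k))"
  then have cT: "card T = m + k" by (simp add: SP_vertices_def)
  obtain S s where S: "S \<subseteq> T" "card S = k" and pend: "pendant_at TE S s"
    using tree_pendant_set[OF T k] cT by auto
  have fin: "finite T" using T by (simp add: is_tree_def simple_graph_def)
  have "finite S" "s \<in> S" using fin S(1) pend finite_subset by (auto simp: pendant_at_def)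
  moreover have "card S = card {m + 1..m + k}" "m + 1 \<in> {m + 1..m + k}" using S(2) k by auto
  ultimately obtain h where h: "bij_betw h S {m + 1..m + k}" "h s = m + 1"
    using finite_same_card_bij_with_value[of S "{m + 1..m + k}"] by blast
  have TS: "T - (T - S) = S" using S(1) by blast
  show "subgraph_embeds T TE (SP_vertices (m + k)) (SP_edges (m + k))"
  proof (rule subgraph_embeds_SP_extend[OF tc T])
    show "card (T - S) = m" using cT S fin by (simp add: card_Diff_subset finite_subset)
    then show "T - S \<noteq> {}" using m card.empty by force
    show "inj_on h (T - (T - S))" "h ` (T - (T - S)) \<subseteq> {m<..m + k}"
      using h(1) unfolding TS by (auto simp: bij_betw_def)
  next
    fix a b j assume ab: "{a, b} \<in> TE" "a \<notin> T - S" "b \<in> T - S" and j: "j \<in> {1..m}"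
    then have "a = s" using tree_edge[OF T ab(1)] pend by (auto simp: pendant_at_def)
    moreover have "\<not> m + 1 dvd j" using j by (auto dest: dvd_imp_le)
    ultimately show "coprime (h a) j" using h(2) p by (simp add: prime_imp_coprime)
  next
    fix a b assume ab: "{a, b} \<in> TE" "a \<notin> T - S" "b \<notin> T - S"
    then have "a \<in> S" "b \<in> S" "a \<noteq> b" using tree_edge[OF T ab(1)] by auto
    then have "h a \<noteq> h b" "h a \<in> {m + 1..m + k}" "h b \<in> {m + 1..m + k}"
      using h(1) by (auto simp: bij_betw_def inj_on_def)
    then show "coprime (h a) (h b)" using labels by (auto simp: pairwise_def)
  qed auto
qed

lemma pairwise_coprime_consecutive: "pairwise coprime {m + 1..m + 2 :: nat}"
proof -
  have "{m + 1..m + 2} = {m + 1, m + 2}" by auto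
  moreover have "coprime (m + 1) (m + 2)" by simp
  ultimately show ?thesis unfolding pairwise_def by (auto simp: coprime_commute)
qed

lemma pairwise_coprime_after_odd_prime:
  assumes "prime (m + 1)" "m \<ge> 2"
  shows "pairwise coprime {m + 1..m + 3 :: nat}"
proof -
  have "\<not> m + 1 dvd m + 3"
  proof
    assume "m + 1 dvd m + 3"
    then have "m + 1 dvd (m + 3) - (m + 1)" by (rule dvd_diff_nat) simp
    then have "m + 1 dvd 2" by simp
    then show False using assms(2) by (auto dest: dvd_imp_le)
  qed
  then have "coprime (m + 1) (m + 3)" using assms(1) by (rule prime_imp_coprime[rotated])
  moreover have "coprime (m + 1) (m + 2)" "coprime (m + 2) (m + 3)"
    by (simp_all add: numeral_3_eq_3)
  moreover have "{m + 1..m + 3} = {m + 1, m + 2, m + 3}" by auto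
  ultimately show ?thesis unfolding pairwise_def by (auto simp: coprime_commute)
qed

lemma tree_complete_SP_add_one_two:
  assumes "m \<ge> 1" "tree_complete (SP_vertices m) (SP_edges m)" "prime (m + 1)"
  shows "tree_complete (SP_vertices (m + 1)) (SP_edges (m + 1))"
    and "tree_complete (SP_vertices (m + 2)) (SP_edges (m + 2))"
  using tree_complete_SP_add[OF assms, of 1] tree_complete_SP_add[OF assms, of 2]
    pairwise_coprime_consecutive by simp_all

lemma tree_complete_SP_add_three:
  assumes "m \<ge> 2" "tree_complete (SP_vertices m) (SP_edges m)" "prime (m + 1)"
  shows "tree_complete (SP_vertices (m + 3)) (SP_edges (m + 3))"
  using tree_complete_SP_add[OF _ assms(2,3), of 3] pairwise_coprime_after_odd_prime[OF assms(3,1)]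
    assms(1) by simp

theorem corollary9p6:
  fixes n :: nat
  assumes "n \<ge> 1"
    and "tree_complete (SP_vertices n) (SP_edges n)"
    and "prime (n + 1)"
  shows "tree_complete (SP_vertices (n + 1)) (SP_edges (n + 1)) \<and>
         tree_complete (SP_vertices (n + 2)) (SP_edges (n + 2)) \<and>
         (prime (n + 3) \<longrightarrow>
            (\<forall>k\<in>{1..5::nat}. tree_complete (SP_vertices (n + k)) (SP_edges (n + k))))"
proof -
  have n12: "tree_complete (SP_vertices (n + 1)) (SP_edges (n + 1))"
    "tree_complete (SP_vertices (n + 2)) (SP_edges (n + 2))"
    using tree_complete_SP_add_one_two[OF assms] by blast+
  have "tree_complete (SP_vertices (n + k)) (SP_edges (n + k))" if "prime (n + 3)" "k \<in> {1..5}" for k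
  proof -
    have eq: "n + 2 + 1 = n + 3" "n + 2 + 2 = n + 4" "n + 2 + 3 = n + 5" by simp_all
    have p: "prime (n + 2 + 1)" unfolding eq(1) by (rule that(1))
    have "tree_complete (SP_vertices (n + 3)) (SP_edges (n + 3))"
      "tree_complete (SP_vertices (n + 4)) (SP_edges (n + 4))"
      "tree_complete (SP_vertices (n + 5)) (SP_edges (n + 5))"
      using tree_complete_SP_add_one_two[OF _ n12(2) p] tree_complete_SP_add_three[OF _ n12(2) p]
        assms(1) unfolding eq by simp_all
    moreover have "k = 1 \<or> k = 2 \<or> k = 3 \<or> k = 4 \<or> k = 5" using that(2) by auto
    ultimately show ?thesis using n12 by auto
  qed
  then show ?thesis using n12 by blast
qed

end
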